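(* Let $x_j$ be a real random variable and $\boldsymbol{x}_C$ a random vector independent of $x_j$. If $f(x_j,\boldsymbol{x}_C)=g(x_j)h(\boldsymbol{x}_C)$, where $g$ is a function of $x_j$ only and $h$ is a function of $\boldsymbol{x}_C$ only, then $$\mathbb{E}_{\boldsymbol{x}_C}\big[I_{ice}(x_j;\boldsymbol{x}_C)\big]\ge I_{pdp}(x_j).$$ Moreover, equality holds if $h$ is a nonnegative function.
   Context: Inputs are $\boldsymbol{x}=(x_1,\dots,x_m)$ with independent components; $C=\{1,\dots,m\}\setminus\{j\}$ and $\boldsymbol{x}_C$ denotes the vector of the inputs with indices in $C$. $\mathbb{E}_{z}$ and $\mathbb{V}_{z}$ denote expectation and variance taken with respect to the random variable $z$ only, the other arguments being held fixed. For a fixed value of $\boldsymbol{x}_C$, the ICE importance is $I_{ice}(x_j;\boldsymbol{x}_C)=\sqrt{\mathbb{V}_{x_j}[f(x_j,\boldsymbol{x}_C)]}$. The PDP importance is $I_{pdp}(x_j)=\sqrt{\mathbb{V}_{x_j}\big[\mathbb{E}_{\boldsymbol{x}_C}[f(x_j,\boldsymbol{x}_C)]\big]}$. All expectations and variances involved are assumed to exist and be finite. *)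

theory Defs
  imports "HOL-Probability.Probability"
begin

definition var_wrt :: "'b measure \<Rightarrow> ('b \<Rightarrow> real) \<Rightarrow> real" where
  "var_wrt N u = (\<integral>z. (u z - (\<integral>y. u y \<partial>N))\<^sup>2 \<partial>N)"

definition I_ice :: "'a measure \<Rightarrow> ('a \<Rightarrow> real) \<Rightarrow> (real \<Rightarrow> 'c \<Rightarrow> real) \<Rightarrow> 'c \<Rightarrow> real" where
  "I_ice M X f c = sqrt (var_wrt (distr M borel X) (\<lambda>x. f x c))"

definition I_pdp :: "'a measure \<Rightarrow> ('a \<Rightarrow> real) \<Rightarrow> 'c measure \<Rightarrow> ('a \<Rightarrow> 'c)
    \<Rightarrow> (real \<Rightarrow> 'c \<Rightarrow> real) \<Rightarrow> real" where
  "I_pdp M X MC XC f = sqrt (var_wrt (distr M borel X) (\<lambda>x. \<integral>c. f x c \<partial>(distr M MC XC)))"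

end

theory Submission
  imports Defs
begin

text \<open>For a product f x c = g x * h c both importances factor through the standard deviation
  \<sigma> of g: the ICE importance at c is \<bar>h c\<bar> * \<sigma> and the PDP importance is \<bar>E h\<bar> * \<sigma>.
  The claim thus reduces to \<bar>E h\<bar> \<le> E \<bar>h\<bar>, with equality for nonnegative h.
  Independence and the integrability hypotheses are not needed: both definitions integrate
  against the two marginal distributions separately, and \<bar>E h\<bar> \<le> E \<bar>h\<bar> survives the Bochner
  integral's junk value 0 for non-integrable h.\<close>

lemma var_wrt_nonneg: "var_wrt N u \<ge> 0"
  unfolding var_wrt_def by simp

lemma var_wrt_mult_right: "var_wrt N (\<lambda>x. u x * a) = a\<^sup>2 * var_wrt N u"
proof -
  have "(\<lambda>z. (u z * a - (\<integral>y. u y * a \<partial>N))\<^sup>2) = (\<lambda>z. a\<^sup>2 * (u z - (\<integral>y. u y \<partial>N))\<^sup>2)"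
    by (simp add: power2_eq_square algebra_simps)
  then show ?thesis
    unfolding var_wrt_def by simp
qed

lemma sqrt_var_wrt_mult_right: "sqrt (var_wrt N (\<lambda>x. u x * a)) = \<bar>a\<bar> * sqrt (var_wrt N u)"
  by (simp add: var_wrt_mult_right real_sqrt_mult)

lemma I_ice_product:
  "I_ice M X (\<lambda>x c. g x * h c) c = \<bar>h c\<bar> * sqrt (var_wrt (distr M borel X) g)"
  unfolding I_ice_def by (rule sqrt_var_wrt_mult_right)

lemma integral_I_ice_product:
  "(\<integral>c. I_ice M X (\<lambda>x c. g x * h c) c \<partial>N)
     = (\<integral>c. \<bar>h c\<bar> \<partial>N) * sqrt (var_wrt (distr M borel X) g)"
  unfolding I_ice_product by simp

lemma I_pdp_product:
  "I_pdp M X MC XC (\<lambda>x c. g x * h c)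
     = \<bar>\<integral>c. h c \<partial>distr M MC XC\<bar> * sqrt (var_wrt (distr M borel X) g)"
  unfolding I_pdp_def by (simp add: sqrt_var_wrt_mult_right)

theorem theorem2:
  fixes M :: "'a measure"
    and X :: "'a \<Rightarrow> real"
    and XC :: "'a \<Rightarrow> real ^ 'n"
    and f :: "real \<Rightarrow> real ^ 'n \<Rightarrow> real"
    and g :: "real \<Rightarrow> real"
    and h :: "real ^ 'n \<Rightarrow> real"
  assumes "prob_space M"
    and "X \<in> borel_measurable M"
    and "XC \<in> borel_measurable M"
    and "prob_space.indep_set M
           (sigma_sets (space M) {X -` A \<inter> space M | A. A \<in> sets (borel :: real measure)})
           (sigma_sets (space M) {XC -` A \<inter> space M | A. A \<in> sets (borel :: (real ^ 'n) measure)})"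
    and "\<And>x c. f x c = g x * h c"
    and "g \<in> borel_measurable borel"
    and "h \<in> borel_measurable borel"
    and "integrable (distr M borel X) g"
    and "integrable (distr M borel X) (\<lambda>x. (g x)\<^sup>2)"
    and "integrable (distr M borel XC) h"
  shows "(\<integral>c. I_ice M X f c \<partial>(distr M borel XC)) \<ge> I_pdp M X borel XC f
     \<and> ((\<forall>c. h c \<ge> 0) \<longrightarrow> (\<integral>c. I_ice M X f c \<partial>(distr M borel XC)) = I_pdp M X borel XC f)"
proof -
  define Q where "Q = distr M borel XC"
  define \<sigma> where "\<sigma> = sqrt (var_wrt (distr M borel X) g)"
  have f_eq: "f = (\<lambda>x c. g x * h c)"
    using assms(5) by blast
  have ice: "(\<integral>c. I_ice M X f c \<partial>Q) = (\<integral>c. \<bar>h c\<bar> \<partial>Q) * \<sigma>"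
    unfolding f_eq \<sigma>_def by (rule integral_I_ice_product)
  have pdp: "I_pdp M X borel XC f = \<bar>\<integral>c. h c \<partial>Q\<bar> * \<sigma>"
    unfolding f_eq \<sigma>_def Q_def by (rule I_pdp_product)
  have "\<sigma> \<ge> 0"
    unfolding \<sigma>_def by (simp add: var_wrt_nonneg)
  moreover have "\<bar>\<integral>c. h c \<partial>Q\<bar> \<le> (\<integral>c. \<bar>h c\<bar> \<partial>Q)"
    by (rule integral_abs_bound)
  moreover have "(\<integral>c. \<bar>h c\<bar> \<partial>Q) = \<bar>\<integral>c. h c \<partial>Q\<bar>" if "\<forall>c. h c \<ge> 0"
    using that by simp
  ultimately show ?thesis
    unfolding Q_def[symmetric] ice pdp by (simp add: mult_right_mono)
qed

end
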